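(* Let $G^\sigma$ be a connected oriented unicyclic graph of order $n$ whose unique cycle $C_k^\sigma$ has length $k$, and let $\beta(G^\sigma)$ be its matching number. Then $sr(G^\sigma)=2\beta(G^\sigma)-2$ if $k$ is even, $C_k^\sigma$ is evenly-oriented and $m_{G^\sigma}(\beta(G^\sigma))=2\,m_{G^\sigma-C_k^\sigma}\big(\beta(G^\sigma)-\tfrac{k}{2}\big)$; otherwise $sr(G^\sigma)=2\beta(G^\sigma)$.
   Context: An oriented graph $G^\sigma$ is a simple graph $G$ together with an orientation of each edge. Its skew-adjacency matrix $S(G^\sigma)=(s_{ij})$ has $s_{ij}=1$ if there is an arc from $v_i$ to $v_j$, $s_{ij}=-1$ if there is an arc from $v_j$ to $v_i$, and $0$ otherwise; the skew-rank $sr(G^\sigma)$ is the rank of $S(G^\sigma)$. For an even cycle $u_1\cdots u_ku_1$, its sign is the sign of $\prod_{i=1}^k s_{u_iu_{i+1}}$ ($u_{k+1}=u_1$); the cycle is evenly-oriented if this sign is positive. $m_H(i)$ denotes the number of matchings with exactly $i$ edges in $H$, and $\beta(H)$ the matching number of $H$. $G^\sigma-C_k^\sigma$ is obtained by deleting all vertices of the cycle and their incident edges. *)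

theory Defs
  imports "HOL-Analysis.Analysis"
begin

text \<open>An oriented graph on the finite vertex type 'v is given by its set of arcs A:
  no loops and at most one orientation per edge.\<close>
definition oriented_graph :: "('v \<times> 'v) set \<Rightarrow> bool" where
  "oriented_graph A \<longleftrightarrow> (\<forall>u. (u,u) \<notin> A) \<and> (\<forall>u v. (u,v) \<in> A \<longrightarrow> (v,u) \<notin> A)"

definition edges :: "('v \<times> 'v) set \<Rightarrow> 'v set set" where
  "edges A = {{u,v} | u v. (u,v) \<in> A \<or> (v,u) \<in> A}"

definition adj :: "('v \<times> 'v) set \<Rightarrow> 'v \<Rightarrow> 'v \<Rightarrow> bool" where
  "adj A u v \<longleftrightarrow> (u,v) \<in> A \<or> (v,u) \<in> A"

definition skew_entry :: "('v \<times> 'v) set \<Rightarrow> 'v \<Rightarrow> 'v \<Rightarrow> real" where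
  "skew_entry A i j = (if (i,j) \<in> A then 1 else if (j,i) \<in> A then -1 else 0)"

definition skew_adj :: "('v::finite \<times> 'v) set \<Rightarrow> real^'v^'v" where
  "skew_adj A = (\<chi> i j. skew_entry A i j)"

definition skew_rank :: "('v::finite \<times> 'v) set \<Rightarrow> nat" where
  "skew_rank A = rank (skew_adj A)"

definition connected_graph :: "('v \<times> 'v) set \<Rightarrow> bool" where
  "connected_graph A \<longleftrightarrow> (\<forall>u v. (adj A)\<^sup>*\<^sup>* u v)"

definition is_cycle :: "('v \<times> 'v) set \<Rightarrow> 'v list \<Rightarrow> bool" where
  "is_cycle A cs \<longleftrightarrow> length cs \<ge> 3 \<and> distinct cs \<and>
     (\<forall>i < length cs. adj A (cs ! i) (cs ! ((i + 1) mod length cs)))"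

definition cycle_edges :: "'v list \<Rightarrow> 'v set set" where
  "cycle_edges cs = {{cs ! i, cs ! ((i + 1) mod length cs)} | i. i < length cs}"

text \<open>Unicyclic: connected with exactly one cycle (cycles identified by their edge sets).\<close>
definition unicyclic :: "('v \<times> 'v) set \<Rightarrow> bool" where
  "unicyclic A \<longleftrightarrow> connected_graph A \<and> (\<exists>cs. is_cycle A cs) \<and>
     (\<forall>cs cs'. is_cycle A cs \<and> is_cycle A cs' \<longrightarrow> cycle_edges cs = cycle_edges cs')"

definition evenly_oriented :: "('v \<times> 'v) set \<Rightarrow> 'v list \<Rightarrow> bool" where
  "evenly_oriented A cs \<longleftrightarrow>
     (\<Prod>i<length cs. skew_entry A (cs ! i) (cs ! ((i + 1) mod length cs))) > 0"

definition matching_in :: "('v \<times> 'v) set \<Rightarrow> 'v set \<Rightarrow> 'v set set \<Rightarrow> bool" where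
  "matching_in A W M \<longleftrightarrow> M \<subseteq> {e \<in> edges A. e \<subseteq> W} \<and>
     (\<forall>e\<in>M. \<forall>f\<in>M. e \<noteq> f \<longrightarrow> e \<inter> f = {})"

definition num_matchings :: "('v \<times> 'v) set \<Rightarrow> 'v set \<Rightarrow> nat \<Rightarrow> nat" where
  "num_matchings A W i = card {M. matching_in A W M \<and> card M = i}"

definition matching_number :: "('v \<times> 'v) set \<Rightarrow> 'v set \<Rightarrow> nat" where
  "matching_number A W = Max {card M | M. matching_in A W M}"

end

theory Submission
  imports Defs "HOL-Combinatorics.Cycles"
begin

(* Let S be the skew-adjacency matrix. Being skew-symmetric, S has a nonsingular principal
   submatrix S[W] with |W| = sr, and no larger one, so the skew-rank is governed by the
   principal minors. Expanding det S[W] over the permutations of W that send every vertex to a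
   neighbour, each involution contributes +1, and the involutions correspond to the perfect
   matchings of W. Any other such permutation has an orbit that is a cycle of G, hence runs
   around C in one of its two directions and is an involution on W - C. Writing e = +-1 for the
   sign of C and pm for the number of perfect matchings, this gives
     det S[W] = pm(W) + [C \<subseteq> W] pm(W - C) (-1)^(k-1) (1 + (-1)^k) e.
   If k is odd or e = -1, then det S[W] >= pm(W) > 0 for the vertex set W of a maximum matching,
   so sr = 2 beta. Otherwise det S[W] = pm(W) - 2 pm(W - C) >= 0, because each perfect matching of
   W - C extends by either of the two perfect matchings of C; summed over |W| = 2 beta this is
   m(beta) - 2 m_{G-C}(beta - k/2), so sr = 2 beta exactly when that number is nonzero. In any
   case sr >= 2 beta - 2: drop from a maximum matching an edge meeting C (one exists, else a
   cycle edge could be added) and the remaining vertices W satisfy det S[W] = pm(W) > 0. *)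

section \<open>Principal minors and rank\<close>

(* The principal submatrix S[W], padded with the identity outside W \<times> W so that it stays
   a square matrix over the same index type: its determinant is the principal minor of S on W. *)
definition principal_submatrix :: "real^'n^'n \<Rightarrow> 'n set \<Rightarrow> real^'n^'n" where
  "principal_submatrix S W = (\<chi> i j. if i \<in> W \<and> j \<in> W then S$i$j else if i = j then 1 else 0)"

lemma mult_vec_nth_supported:
  fixes S :: "real^'n^'n"
  assumes "\<And>j. j \<notin> W \<Longrightarrow> x$j = 0"
  shows "(S *v x)$i = (\<Sum>j\<in>W. S$i$j * x$j)"
  unfolding matrix_vector_mult_def using assms
  by (auto intro: sum.mono_neutral_right)

lemma principal_submatrix_mult_vec_nth:
  "(principal_submatrix S W *v x)$i = (if i \<in> W then (\<Sum>j\<in>W. S$i$j * x$j) else x$i)"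
  by (auto simp: matrix_vector_mult_def principal_submatrix_def if_distrib[of "\<lambda>a. a * _"]
      sum.If_cases cong: if_cong)

lemma principal_submatrix_mult_vec_eq_0_iff:
  "principal_submatrix S W *v x = 0 \<longleftrightarrow> (\<forall>j. j \<notin> W \<longrightarrow> x$j = 0) \<and> (\<forall>i\<in>W. (S *v x)$i = 0)"
proof
  assume "principal_submatrix S W *v x = 0"
  then have h: "(principal_submatrix S W *v x)$i = 0" for i
    by simp
  then have supp: "\<forall>j. j \<notin> W \<longrightarrow> x$j = 0"
    by (metis principal_submatrix_mult_vec_nth)
  have "(S *v x)$i = 0" if "i \<in> W" for i
    using h[of i] that principal_submatrix_mult_vec_nth[of S W x i]
      mult_vec_nth_supported[of W x S i] supp by simp
  with supp show "(\<forall>j. j \<notin> W \<longrightarrow> x$j = 0) \<and> (\<forall>i\<in>W. (S *v x)$i = 0)"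
    by blast
next
  assume h: "(\<forall>j. j \<notin> W \<longrightarrow> x$j = 0) \<and> (\<forall>i\<in>W. (S *v x)$i = 0)"
  have "(principal_submatrix S W *v x)$i = 0" for i
    using h principal_submatrix_mult_vec_nth[of S W x i] mult_vec_nth_supported[of W x S i]
    by auto
  then show "principal_submatrix S W *v x = 0"
    by (simp add: vec_eq_iff)
qed

lemma det_principal_submatrix_nonzero_iff:
  "det (principal_submatrix S W) \<noteq> 0 \<longleftrightarrow>
   (\<forall>x. (\<forall>j. j \<notin> W \<longrightarrow> x$j = 0) \<and> (\<forall>i\<in>W. (S *v x)$i = 0) \<longrightarrow> x = 0)"
proof -
  have lin: "linear ((*v) (principal_submatrix S W))" by simp
  have "det (principal_submatrix S W) \<noteq> 0 \<longleftrightarrow> inj ((*v) (principal_submatrix S W))"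
    using det_nz_iff_inj[OF lin] by simp
  also have "\<dots> \<longleftrightarrow> (\<forall>x. principal_submatrix S W *v x = 0 \<longrightarrow> x = 0)"
    using linear_injective_0[OF lin] by simp
  finally show ?thesis
    unfolding principal_submatrix_mult_vec_eq_0_iff .
qed

lemma card_le_rank_if_det_principal_submatrix_nonzero:
  fixes S :: "real^'n^'n"
  assumes "det (principal_submatrix S W) \<noteq> 0"
  shows "card W \<le> rank S"
proof -
  let ?B = "(\<lambda>j. axis j (1::real)) ` W"
  have indB: "independent ?B"
    by (rule real_vector.independent_mono[OF independent_Basis]) auto
  have support: "span ?B \<subseteq> {x. \<forall>j. j \<notin> W \<longrightarrow> x$j = 0}"
    by (rule span_minimal) (auto simp: axis_def subspace_def)
  have inj: "inj_on ((*v) S) (span ?B)"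
  proof (rule inj_onI)
    fix x y assume "x \<in> span ?B" "y \<in> span ?B" and "S *v x = S *v y"
    then have "\<forall>j. j \<notin> W \<longrightarrow> (x - y)$j = 0" and "S *v (x - y) = 0"
      using subsetD[OF support] by (auto simp: matrix_vector_mult_diff_distrib)
    then show "x = y"
      using assms[unfolded det_principal_submatrix_nonzero_iff] by fastforce
  qed
  have ind_image: "independent ((*v) S ` ?B)"
    by (rule real_vector.linear_independent_injective_image[OF _ indB inj]) simp
  have "card W = card ?B"
    by (rule card_image[symmetric]) (auto simp: inj_on_def axis_eq_axis)
  also have "\<dots> = card ((*v) S ` ?B)"
    by (rule card_image[symmetric]) (rule inj_on_subset[OF inj span_superset])
  also have "\<dots> \<le> dim (range ((*v) S))"
    by (rule independent_card_le_dim[OF _ ind_image]) auto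
  also have "\<dots> = rank S"
    by (simp add: rank_dim_range)
  finally show ?thesis .
qed

lemma skew_symmetric_mult_vec_nth:
  fixes S :: "real^'n^'n"
  assumes "\<And>i j. S$i$j = - S$j$i"
  shows "(S *v x)$j = - (column j S \<bullet> x)"
proof -
  have "(S *v x)$j = (\<Sum>l\<in>UNIV. - (S$l$j * x$l))"
    unfolding matrix_vector_mult_def by (simp add: assms[of j])
  then show ?thesis
    by (simp add: sum_negf inner_vec_def column_def)
qed

(* Skew-symmetry turns "S x vanishes on J" into "x is orthogonal to the columns indexed by J". *)
lemma det_principal_submatrix_column_basis:
  fixes S :: "real^'n^'n"
  assumes skew: "\<And>i j. S$i$j = - S$j$i"
    and inj: "inj_on (\<lambda>j. column j S) J" and indep: "independent ((\<lambda>j. column j S) ` J)"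
    and spanning: "columns S \<subseteq> span ((\<lambda>j. column j S) ` J)"
  shows "det (principal_submatrix S J) \<noteq> 0"
  unfolding det_principal_submatrix_nonzero_iff
proof (intro allI impI)
  fix x :: "real^'n"
  assume h: "(\<forall>j. j \<notin> J \<longrightarrow> x$j = 0) \<and> (\<forall>i\<in>J. (S *v x)$i = 0)"
  have orth_J: "orthogonal x (column j S)" if "j \<in> J" for j
  proof -
    have "(S *v x)$j = 0"
      using h that by blast
    then have "column j S \<bullet> x = 0"
      using skew_symmetric_mult_vec_nth[OF skew] by (metis neg_equal_0_iff_equal)
    then show ?thesis
      by (simp add: orthogonal_def inner_commute)
  qed
  have "orthogonal x (column j S)" for j
  proof (rule orthogonal_to_span)
    show "column j S \<in> span ((\<lambda>j. column j S) ` J)"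
      using spanning by (auto simp: columns_def)
  qed (use orth_J in auto)
  then have "(S *v x)$j = 0" for j
    using skew_symmetric_mult_vec_nth[OF skew, of x j] by (simp add: orthogonal_def inner_commute)
  moreover have "S *v x = (\<Sum>c\<in>(\<lambda>j. column j S) ` J. x$(inv_into J (\<lambda>j. column j S) c) *\<^sub>R c)"
  proof -
    have "S *v x = (\<Sum>j\<in>J. x$j *s column j S)"
      unfolding matrix_mult_sum using h by (intro sum.mono_neutral_right) auto
    then show ?thesis
      by (simp add: sum.reindex[OF inj] inv_into_f_f[OF inj] scalar_mult_eq_scaleR)
  qed
  ultimately have "\<forall>j\<in>J. x$j = 0"
    using indep inv_into_f_f[OF inj] unfolding eucl.independent_explicit
    by (auto simp: vec_eq_iff elim!: allE[of _ "\<lambda>c. x$(inv_into J (\<lambda>j. column j S) c)"])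
  then show "x = 0"
    using h by (auto simp: vec_eq_iff)
qed

lemma skew_symmetric_rank_principal_minor:
  fixes S :: "real^'n^'n"
  assumes skew: "\<And>i j. S$i$j = - S$j$i"
  obtains W where "card W = rank S" "det (principal_submatrix S W) \<noteq> 0"
proof -
  obtain B where B: "B \<subseteq> columns S" "independent B" "columns S \<subseteq> span B"
    using real_vector.maximal_independent_subset[of "columns S"] by blast
  have "\<forall>b\<in>B. \<exists>j. column j S = b"
    using B(1) by (auto simp: columns_def)
  then obtain g where g: "\<And>b. b \<in> B \<Longrightarrow> column (g b) S = b"
    by metis
  then have inj_g: "inj_on g B" and image: "(\<lambda>j. column j S) ` g ` B = B"
    by (metis inj_onI, force simp: image_image)
  have "inj_on (\<lambda>j. column j S) (g ` B)"
    using g by (auto simp: inj_on_def)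
  then have "det (principal_submatrix S (g ` B)) \<noteq> 0"
    using B(2,3) image by (intro det_principal_submatrix_column_basis[OF skew]) simp_all
  moreover have "card (g ` B) = rank S"
    unfolding card_image[OF inj_g] column_rank_def
    by (rule real_vector.basis_card_eq_dim[OF B(1) B(3) B(2)])
  ultimately show thesis
    using that by blast
qed

section \<open>Expansion of skew-adjacency minors\<close>

lemma skew_adj_nth [simp]: "skew_adj A $ i $ j = skew_entry A i j"
  by (simp add: skew_adj_def)

lemma adj_sym: "adj A i j \<longleftrightarrow> adj A j i"
  by (auto simp: adj_def)

lemma adj_irrefl: "oriented_graph A \<Longrightarrow> \<not> adj A i i"
  by (auto simp: oriented_graph_def adj_def)

lemma skew_entry_antisym: "oriented_graph A \<Longrightarrow> skew_entry A j i = - skew_entry A i j"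
  by (auto simp: skew_entry_def oriented_graph_def)

lemma skew_entry_nonzero_iff: "skew_entry A i j \<noteq> 0 \<longleftrightarrow> adj A i j"
  by (auto simp: skew_entry_def adj_def)

lemma abs_skew_entry: "adj A i j \<Longrightarrow> \<bar>skew_entry A i j\<bar> = 1"
  by (auto simp: skew_entry_def adj_def)

lemma skew_entry_mult_swap:
  "oriented_graph A \<Longrightarrow> adj A i j \<Longrightarrow> skew_entry A i j * skew_entry A j i = -1"
  by (auto simp: skew_entry_def oriented_graph_def adj_def)

lemma skew_adj_skew_symmetric: "oriented_graph A \<Longrightarrow> skew_adj A $ i $ j = - skew_adj A $ j $ i"
  using skew_entry_antisym[of A j i] by simp

definition neighbour_permutations :: "('v \<times> 'v) set \<Rightarrow> 'v set \<Rightarrow> ('v \<Rightarrow> 'v) set" where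
  "neighbour_permutations A W = {p. p permutes W \<and> (\<forall>i\<in>W. adj A i (p i))}"

definition neighbour_involutions :: "('v \<times> 'v) set \<Rightarrow> 'v set \<Rightarrow> ('v \<Rightarrow> 'v) set" where
  "neighbour_involutions A W = {p \<in> neighbour_permutations A W. \<forall>i. p (p i) = i}"

definition permutation_term :: "('v \<times> 'v) set \<Rightarrow> 'v set \<Rightarrow> ('v \<Rightarrow> 'v) \<Rightarrow> real" where
  "permutation_term A W p = of_int (sign p) * (\<Prod>i\<in>W. skew_entry A i (p i))"

lemma finite_neighbour_permutations: "finite W \<Longrightarrow> finite (neighbour_permutations A W)"
  by (rule finite_subset[of _ "{p. p permutes W}"]) (auto simp: neighbour_permutations_def finite_permutations)

lemma det_principal_submatrix_skew_adj:
  fixes A :: "('v::finite \<times> 'v) set"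
  shows "det (principal_submatrix (skew_adj A) W) =
    (\<Sum>p\<in>neighbour_permutations A W. permutation_term A W p)"
proof -
  let ?M = "principal_submatrix (skew_adj A) W"
  let ?t = "\<lambda>p. of_int (sign p) * (\<Prod>i\<in>UNIV. ?M$i$(p i))"
  have vanish: "?t p = 0" if perm: "p permutes UNIV" and notin: "p \<notin> neighbour_permutations A W" for p
  proof -
    have "\<exists>i. ?M$i$(p i) = 0"
    proof (cases "\<exists>i. i \<notin> W \<and> p i \<noteq> i")
      case True
      then show ?thesis by (auto simp: principal_submatrix_def)
    next
      case False
      then have pW: "p permutes W"
        using perm permutes_superset[of p UNIV W] by auto
      then obtain i where i: "i \<in> W" "\<not> adj A i (p i)"
        using notin by (auto simp: neighbour_permutations_def)
      then show ?thesis
        using permutes_in_image[OF pW] skew_entry_nonzero_iff[of A i "p i"]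
        by (intro exI[of _ i]) (simp add: principal_submatrix_def)
    qed
    then show ?thesis by (auto simp: prod_zero_iff)
  qed
  have restrict: "?t p = permutation_term A W p" if "p \<in> neighbour_permutations A W" for p
  proof -
    have pW: "p permutes W" using that by (simp add: neighbour_permutations_def)
    have "(\<Prod>i\<in>UNIV. ?M$i$(p i)) = (\<Prod>i\<in>W. ?M$i$(p i))"
      by (rule prod.mono_neutral_right) (use pW in \<open>auto simp: principal_submatrix_def permutes_not_in\<close>)
    also have "\<dots> = (\<Prod>i\<in>W. skew_entry A i (p i))"
      by (rule prod.cong) (use pW in \<open>auto simp: principal_submatrix_def permutes_in_image\<close>)
    finally show ?thesis by (simp add: permutation_term_def)
  qed
  have "det ?M = (\<Sum>p\<in>{p. p permutes UNIV}. ?t p)"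
    by (simp add: det_def)
  also have "\<dots> = (\<Sum>p\<in>neighbour_permutations A W. ?t p)"
    by (rule sum.mono_neutral_right)
      (auto simp: finite_permutations vanish neighbour_permutations_def intro: permutes_subset)
  also have "\<dots> = (\<Sum>p\<in>neighbour_permutations A W. permutation_term A W p)"
    by (rule sum.cong[OF refl restrict])
  finally show ?thesis .
qed

lemma neighbour_involution_remove_pair:
  assumes og: "oriented_graph A" and p: "p \<in> neighbour_involutions A W" and "finite W" and u: "u \<in> W"
  defines "q \<equiv> Transposition.transpose u (p u) \<circ> p"
  shows "q \<in> neighbour_involutions A (W - {u, p u})"
    and "permutation_term A W p = permutation_term A (W - {u, p u}) q"
proof -
  define v where "v = p u"
  define W' where "W' = W - {u, v}"
  have pW: "p permutes W" and padj: "\<forall>i\<in>W. adj A i (p i)" and inv: "\<forall>i. p (p i) = i"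
    using p by (auto simp: neighbour_involutions_def neighbour_permutations_def)
  have vW: "v \<in> W" using pW u by (simp add: v_def permutes_in_image)
  have uv: "u \<noteq> v" using padj u adj_irrefl[OF og] v_def by metis
  have pv: "p v = u" using inv v_def by simp
  have pW': "p i \<in> W'" if "i \<in> W'" for i
  proof -
    have "p i \<noteq> u" "p i \<noteq> v"
      using that inv pv v_def W'_def by (metis insert_iff Diff_iff)+
    then show ?thesis
      using that pW W'_def permutes_in_image by fastforce
  qed
  have qeq: "q i = p i" if "i \<in> W'" for i
    using pW'[OF that] W'_def by (auto simp: q_def v_def transpose_def)
  have qperm: "q permutes W'"
  proof -
    have "q permutes W"
      unfolding q_def by (rule permutes_compose[OF pW permutes_swap_id[OF u]]) (simp add: vW[unfolded v_def])
    moreover have "\<forall>x\<in>W - W'. q x = x"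
      using pv v_def by (auto simp: W'_def q_def transpose_def)
    ultimately show ?thesis by (intro permutes_superset[of q W W']) auto
  qed
  have "q (q i) = i" for i
    by (cases "i \<in> W'") (use qeq pW' inv qperm in \<open>auto simp: permutes_not_in\<close>)
  then show "q \<in> neighbour_involutions A (W - {u, p u})"
    using qperm padj qeq by (auto simp: neighbour_involutions_def neighbour_permutations_def W'_def v_def)
  have "sign p = - sign q"
  proof -
    have "p = Transposition.transpose u v \<circ> q"
      by (simp add: q_def v_def fun_eq_iff)
    moreover have "permutation q"
      using qperm \<open>finite W\<close> W'_def permutation_permutes by blast
    ultimately show ?thesis using uv by (simp add: sign_compose permutation_swap_id sign_swap_id)
  qed
  moreover have "(\<Prod>i\<in>W. skew_entry A i (p i)) = - (\<Prod>i\<in>W'. skew_entry A i (q i))"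
  proof -
    have "W = {u, v} \<union> W'" using u vW W'_def by auto
    then have "(\<Prod>i\<in>W. skew_entry A i (p i)) =
        (\<Prod>i\<in>{u,v}. skew_entry A i (p i)) * (\<Prod>i\<in>W'. skew_entry A i (p i))"
      using \<open>finite W\<close> by (metis W'_def finite_Diff prod.union_disjoint Diff_disjoint finite.emptyI finite_insert)
    also have "(\<Prod>i\<in>{u,v}. skew_entry A i (p i)) = -1"
      using uv pv v_def skew_entry_mult_swap[OF og, of u v] padj u by simp
    also have "(\<Prod>i\<in>W'. skew_entry A i (p i)) = (\<Prod>i\<in>W'. skew_entry A i (q i))"
      by (rule prod.cong) (auto simp: qeq)
    finally show ?thesis by simp
  qed
  ultimately show "permutation_term A W p = permutation_term A (W - {u, p u}) q"
    by (simp add: permutation_term_def W'_def v_def)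
qed

(* Each 2-cycle (u v) contributes sign -1 and the factor s_uv s_vu = -1. *)
lemma permutation_term_neighbour_involution:
  assumes og: "oriented_graph A" and "finite W" and "p \<in> neighbour_involutions A W"
  shows "permutation_term A W p = 1"
  using assms(2,3)
proof (induction "card W" arbitrary: W p rule: less_induct)
  case less
  show ?case
  proof (cases "W = {}")
    case True
    then have "p = id"
      using less.prems by (simp add: neighbour_involutions_def neighbour_permutations_def)
    then show ?thesis using True by (simp add: permutation_term_def)
  next
    case False
    then obtain u where u: "u \<in> W" by blast
    have "card (W - {u, p u}) < card W"
      using less.prems(1) u by (intro psubset_card_mono) auto
    then show ?thesis
      using less neighbour_involution_remove_pair[OF og less.prems(2,1) u] by simp
  qed
qed

section \<open>Perfect matchings\<close>

definition perfect_matchings :: "('v \<times> 'v) set \<Rightarrow> 'v set \<Rightarrow> 'v set set set" where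
  "perfect_matchings A W = {M. matching_in A W M \<and> \<Union>M = W}"

lemma edgesI: "adj A u v \<Longrightarrow> {u, v} \<in> edges A"
  by (auto simp: edges_def adj_def)

lemma edgesE:
  assumes "oriented_graph A" "e \<in> edges A"
  obtains u v where "e = {u, v}" "adj A u v" "u \<noteq> v"
  using assms unfolding edges_def adj_def oriented_graph_def by blast

lemma matching_inD:
  "matching_in A W M \<Longrightarrow> e \<in> M \<Longrightarrow> e \<subseteq> W \<and> e \<in> edges A"
  "matching_in A W M \<Longrightarrow> e \<in> M \<Longrightarrow> f \<in> M \<Longrightarrow> e \<noteq> f \<Longrightarrow> e \<inter> f = {}"
  by (auto simp: matching_in_def)

lemma matching_in_mono: "matching_in A W M \<Longrightarrow> W \<subseteq> W' \<Longrightarrow> matching_in A W' M"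
  by (auto simp: matching_in_def)

lemma matching_in_Union: "matching_in A W M \<Longrightarrow> M \<in> perfect_matchings A (\<Union>M)"
  by (auto simp: perfect_matchings_def matching_in_def)

lemma matching_in_insert:
  assumes "matching_in A W M" and "e \<in> edges A" "e \<subseteq> W" and "\<forall>f\<in>M. e \<inter> f = {}"
  shows "matching_in A W (insert e M)"
proof -
  have "f \<inter> e = {}" if "f \<in> M" for f
    using assms(4) that by blast
  then show ?thesis
    using assms unfolding matching_in_def by auto
qed

lemma card_Union_matching:
  assumes og: "oriented_graph A" and m: "matching_in A W M" and "finite M"
  shows "card (\<Union>M) = 2 * card M"
proof -
  have card_edge: "card e = 2" if "e \<in> M" for e
    using matching_inD(1)[OF m that] edgesE[OF og] by (metis card_2_iff)
  have "finite e" if "e \<in> M" for e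
    using card_edge[OF that] by (metis card.infinite zero_neq_numeral)
  then have "card (\<Union>M) = sum card M"
    using m \<open>finite M\<close> by (intro card_Union_disjoint) (auto simp: pairwise_def disjnt_def matching_in_def)
  then show ?thesis
    using card_edge by simp
qed

lemma card_perfect_matching:
  fixes A :: "('v::finite \<times> 'v) set"
  assumes "oriented_graph A" and "M \<in> perfect_matchings A W"
  shows "card W = 2 * card M"
  using card_Union_matching[OF assms(1), of W M] assms(2) by (simp add: perfect_matchings_def)

lemma card_matching_le_matching_number:
  fixes A :: "('v::finite \<times> 'v) set"
  assumes "matching_in A W M"
  shows "card M \<le> matching_number A UNIV"
  unfolding matching_number_def
  using matching_in_mono[OF assms] by (intro Max_ge) (auto intro: finite_image_set)

lemma maximum_matching_exists:
  fixes A :: "('v::finite \<times> 'v) set"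
  obtains M where "matching_in A UNIV M" "card M = matching_number A UNIV"
proof -
  have "matching_number A UNIV \<in> {card M | M. matching_in A UNIV M}"
    unfolding matching_number_def
    by (rule Max_in) (auto intro: finite_image_set exI[of _ "{}"] simp: matching_in_def)
  then show thesis
    using that by force
qed

definition matching_of :: "'v set \<Rightarrow> ('v \<Rightarrow> 'v) \<Rightarrow> 'v set set" where
  "matching_of W p = {{i, p i} | i. i \<in> W}"

lemma matching_of_perfect:
  assumes "p \<in> neighbour_involutions A W"
  shows "matching_of W p \<in> perfect_matchings A W"
proof -
  have pW: "p permutes W" and padj: "\<forall>i\<in>W. adj A i (p i)" and inv: "\<forall>i. p (p i) = i"
    using assms by (auto simp: neighbour_involutions_def neighbour_permutations_def)
  have "{i, p i} = {j, p j}" if "{i, p i} \<inter> {j, p j} \<noteq> {}" for i j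
  proof -
    from that have "i = j \<or> i = p j \<or> p i = j \<or> p i = p j" by auto
    then show ?thesis using inv by (metis insert_commute)
  qed
  then have "matching_in A W (matching_of W p)"
    using padj pW unfolding matching_in_def matching_of_def
    by (auto simp: permutes_in_image intro: edgesI)
  moreover have "\<Union>(matching_of W p) = W"
    using pW by (auto simp: matching_of_def permutes_in_image)
  ultimately show ?thesis by (simp add: perfect_matchings_def)
qed

lemma inj_on_matching_of: "inj_on (matching_of W) (neighbour_involutions A W)"
proof (rule inj_onI)
  fix p p' assume p: "p \<in> neighbour_involutions A W" and p': "p' \<in> neighbour_involutions A W"
    and eq: "matching_of W p = matching_of W p'"
  have perm: "p permutes W" "p' permutes W" and inv': "\<forall>x. p' (p' x) = x"
    using p p' by (auto simp: neighbour_involutions_def neighbour_permutations_def)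
  show "p = p'"
  proof
    fix i show "p i = p' i"
    proof (cases "i \<in> W")
      case False then show ?thesis using perm by (simp add: permutes_not_in)
    next
      case True
      then have "{i, p i} \<in> matching_of W p'"
        using eq by (auto simp: matching_of_def)
      then obtain j where "{i, p i} = {j, p' j}"
        by (auto simp: matching_of_def)
      then show ?thesis using inv' by (auto simp: doubleton_eq_iff)
    qed
  qed
qed

(* The partner of a vertex in a perfect matching is the involution inverting matching_of. *)
lemma perfect_matching_in_image_matching_of:
  assumes og: "oriented_graph A" and M: "M \<in> perfect_matchings A W"
  shows "M \<in> matching_of W ` neighbour_involutions A W"
proof -
  have m: "matching_in A W M" and U: "\<Union>M = W"
    using M by (auto simp: perfect_matchings_def)
  have ex: "\<exists>j. {i, j} \<in> M" if iW: "i \<in> W" for i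
  proof -
    obtain e where e: "e \<in> M" "i \<in> e" using U iW by blast
    then obtain u v where "e = {u, v}" using matching_inD(1)[OF m] edgesE[OF og] by metis
    then show ?thesis using e by (metis insert_commute insertE singletonD)
  qed
  have uniq: "j = j'" if "{i, j} \<in> M" "{i, j'} \<in> M" for i j j'
    using matching_inD(2)[OF m that] by (auto simp: doubleton_eq_iff)
  define p where "p i = (if i \<in> W then (THE j. {i, j} \<in> M) else i)" for i
  have pM: "{i, p i} \<in> M" if "i \<in> W" for i
    using ex[OF that] uniq that unfolding p_def by (metis (mono_tags, lifting) theI)
  have pW: "p i \<in> W" if "i \<in> W" for i
    using matching_inD(1)[OF m pM[OF that]] by auto
  have inv: "p (p i) = i" for i
  proof (cases "i \<in> W")
    case True
    have "{p i, i} \<in> M" using pM[OF True] by (simp add: insert_commute)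
    then show ?thesis using pM[OF pW[OF True]] uniq by blast
  qed (simp add: p_def)
  have "adj A i (p i)" if "i \<in> W" for i
    using matching_inD(1)[OF m pM[OF that]] edgesE[OF og]
    by (metis adj_sym doubleton_eq_iff)
  moreover have "p permutes W"
    unfolding permutes_def using inv by (metis p_def)
  ultimately have pI: "p \<in> neighbour_involutions A W"
    using inv by (simp add: neighbour_involutions_def neighbour_permutations_def)
  have "matching_of W p = M"
  proof
    show "matching_of W p \<subseteq> M" using pM by (auto simp: matching_of_def)
    show "M \<subseteq> matching_of W p"
    proof
      fix e assume e: "e \<in> M"
      obtain u v where uv: "e = {u, v}" using matching_inD(1)[OF m e] edgesE[OF og] by metis
      have "u \<in> W" using matching_inD(1)[OF m e] uv by auto
      moreover have "p u = v" using uniq[OF pM[OF \<open>u \<in> W\<close>], of v] e uv by simp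
      ultimately show "e \<in> matching_of W p" using uv by (auto simp: matching_of_def)
    qed
  qed
  then show ?thesis using pI by blast
qed

lemma card_neighbour_involutions:
  assumes "oriented_graph A"
  shows "card (neighbour_involutions A W) = card (perfect_matchings A W)"
proof -
  have "matching_of W ` neighbour_involutions A W = perfect_matchings A W"
    using matching_of_perfect perfect_matching_in_image_matching_of[OF assms] by blast
  then show ?thesis
    using card_image[OF inj_on_matching_of] by metis
qed

lemma perfect_matching_Un:
  assumes "U \<subseteq> W" and "M \<in> perfect_matchings A (W - U)" and "X \<in> perfect_matchings A U"
  shows "M \<union> X \<in> perfect_matchings A W"
proof -
  have m: "matching_in A (W - U) M" "\<Union>M = W - U" and x: "matching_in A U X" "\<Union>X = U"
    using assms(2,3) by (auto simp: perfect_matchings_def)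
  have "M \<union> X \<subseteq> {e \<in> edges A. e \<subseteq> W}"
    using matching_inD(1)[OF m(1)] matching_inD(1)[OF x(1)] assms(1) by auto
  moreover have "e \<inter> f = {}" if ef: "e \<in> M \<union> X" "f \<in> M \<union> X" "e \<noteq> f" for e f
  proof -
    have cross: "e' \<inter> f' = {}" if "e' \<in> M" "f' \<in> X" for e' f'
      using that m(2) x(2) by blast
    consider "e \<in> M" "f \<in> M" | "e \<in> M" "f \<in> X" | "e \<in> X" "f \<in> M" | "e \<in> X" "f \<in> X"
      using ef(1,2) by blast
    then show ?thesis
    proof cases
      case 1 then show ?thesis using matching_inD(2)[OF m(1)] ef(3) by blast
    next
      case 2 then show ?thesis using cross by blast
    next
      case 3 then show ?thesis using cross[of f e] by (simp add: Int_commute)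
    next
      case 4 then show ?thesis using matching_inD(2)[OF x(1)] ef(3) by blast
    qed
  qed
  ultimately have "matching_in A W (M \<union> X)"
    unfolding matching_in_def by blast
  then show ?thesis
    using m(2) x(2) assms(1) by (auto simp: perfect_matchings_def)
qed

lemma perfect_matchings_disjoint:
  "W \<noteq> W' \<Longrightarrow> perfect_matchings A W \<inter> perfect_matchings A W' = {}"
  by (auto simp: perfect_matchings_def)

lemma num_matchings_eq_sum_perfect_matchings:
  fixes A :: "('v::finite \<times> 'v) set"
  assumes og: "oriented_graph A"
  shows "num_matchings A UNIV j = (\<Sum>W | card W = 2 * j. card (perfect_matchings A W))"
proof -
  have "{M. matching_in A UNIV M \<and> card M = j} = (\<Union>W \<in> {W. card W = 2 * j}. perfect_matchings A W)"
    using card_Union_matching[OF og] card_perfect_matching[OF og] matching_in_Union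
    by (auto simp: perfect_matchings_def intro: matching_in_mono)
  then show ?thesis
    unfolding num_matchings_def by (simp add: card_UN_disjoint perfect_matchings_disjoint)
qed

lemma num_matchings_compl_eq_sum_perfect_matchings:
  fixes A :: "('v::finite \<times> 'v) set"
  assumes og: "oriented_graph A" and U: "card U = 2 * r" and "r \<le> j"
  shows "num_matchings A (UNIV - U) (j - r) =
    (\<Sum>W | card W = 2 * j. if U \<subseteq> W then card (perfect_matchings A (W - U)) else 0)"
proof -
  let ?S = "{W. card W = 2 * j \<and> U \<subseteq> W}"
  have "M \<in> (\<Union>W\<in>?S. perfect_matchings A (W - U))"
    if m: "matching_in A (UNIV - U) M" and c: "card M = j - r" for M
  proof -
    have UM: "\<Union>M \<inter> U = {}" using m by (auto simp: matching_in_def)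
    then have "(\<Union>M \<union> U) - U = \<Union>M" by blast
    moreover have "card (\<Union>M \<union> U) = 2 * j"
      using card_Un_disjoint[of "\<Union>M" U] UM card_Union_matching[OF og m] c U \<open>r \<le> j\<close> by simp
    ultimately show ?thesis
      using matching_in_Union[OF m] by (intro UN_I[of "\<Union>M \<union> U"]) auto
  qed
  moreover have "matching_in A (UNIV - U) M \<and> card M = j - r"
    if "W \<in> ?S" "M \<in> perfect_matchings A (W - U)" for W M
    using that card_perfect_matching[OF og that(2)] card_Diff_subset[of U W] U
    by (auto simp: perfect_matchings_def intro: matching_in_mono)
  ultimately have "{M. matching_in A (UNIV - U) M \<and> card M = j - r} =
      (\<Union>W\<in>?S. perfect_matchings A (W - U))"
    by blast
  moreover have "perfect_matchings A (W - U) \<inter> perfect_matchings A (W' - U) = {}"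
    if "W \<in> ?S" "W' \<in> ?S" "W \<noteq> W'" for W W'
    using that by (intro perfect_matchings_disjoint) blast
  ultimately have "num_matchings A (UNIV - U) (j - r) = (\<Sum>W\<in>?S. card (perfect_matchings A (W - U)))"
    unfolding num_matchings_def by (simp add: card_UN_disjoint)
  also have "\<dots> = (\<Sum>W | card W = 2 * j. if U \<subseteq> W then card (perfect_matchings A (W - U)) else 0)"
    by (simp add: sum.inter_filter[symmetric] conj_commute)
  finally show ?thesis .
qed

section \<open>Cycles of neighbour permutations\<close>

lemma sign_cycle_of_list:
  "distinct L \<Longrightarrow> L \<noteq> [] \<Longrightarrow> sign (cycle_of_list L) = (-1) ^ (length L - 1)"
proof (induction L rule: cycle_of_list.induct)
  case (1 i j cs)
  have "sign (cycle_of_list (i # j # cs)) =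
        sign (Transposition.transpose i j) * sign (cycle_of_list (j # cs))"
    by (simp only: cycle_of_list.simps sign_compose[OF permutation_swap_id permutation_of_cycle])
  also have "\<dots> = (-1) * (-1) ^ (length cs)"
    using 1 by (simp add: sign_swap_id)
  finally show ?case by (simp del: cycle_of_list.simps)
qed simp_all

lemma Union_cycle_edges:
  assumes "length L \<ge> 2"
  shows "\<Union>(cycle_edges L) = set L"
proof
  show "\<Union>(cycle_edges L) \<subseteq> set L"
    using assms by (auto simp: cycle_edges_def intro!: nth_mem mod_less_divisor)
  show "set L \<subseteq> \<Union>(cycle_edges L)"
  proof
    fix y assume "y \<in> set L"
    then obtain i where "i < length L" "y = L ! i" by (auto simp: in_set_conv_nth)
    then show "y \<in> \<Union>(cycle_edges L)"
      by (auto simp: cycle_edges_def)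
  qed
qed

lemma support_nth_Suc_mod:
  assumes "permutation p" "p x \<noteq> x" "i < least_power p x"
  shows "support p x ! ((i + 1) mod least_power p x) = p (support p x ! i)"
proof (cases "i + 1 < least_power p x")
  case False
  then have last: "Suc i = least_power p x" using assms(3) by simp
  then have "p ((p ^^ i) x) = x"
    using least_power_of_permutation(1)[OF assms(1), of x] by (metis comp_apply funpow.simps(2))
  then show ?thesis
    using last least_power_gt_one[OF assms(1,2)] assms(3) by simp
qed (use assms in simp)

lemma funpow_not_involutive:
  assumes "inj p" and "p (p x) \<noteq> x"
  shows "p (p ((p ^^ i) x)) \<noteq> (p ^^ i) x"
proof
  assume "p (p ((p ^^ i) x)) = (p ^^ i) x"
  then have "(p ^^ i) (p (p x)) = (p ^^ i) x"
    by (simp add: funpow_swap1)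
  then show False
    using assms injD[OF inj_fn[OF assms(1)]] by metis
qed

lemma neighbour_permutation_orbit_cycle:
  assumes p: "p \<in> neighbour_permutations A W" and "finite W" and x: "p (p x) \<noteq> x"
  obtains L where "is_cycle A L" "x \<in> set L" "set L \<subseteq> W"
    "\<forall>y\<in>set L. {y, p y} \<in> cycle_edges L \<and> p (p y) \<noteq> y"
proof
  have pW: "p permutes W" and padj: "\<forall>i\<in>W. adj A i (p i)"
    using p by (auto simp: neighbour_permutations_def)
  have perm: "permutation p" using pW assms(2) permutation_permutes by blast
  have px: "p x \<noteq> x" using x by auto
  define m where "m = least_power p x"
  define L where "L = support p x"
  have len: "length L = m" by (simp add: L_def m_def)
  have nth: "L ! i = (p ^^ i) x" if "i < m" for i using that by (simp add: L_def m_def)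
  have step: "L ! ((i + 1) mod m) = p (L ! i)" if "i < m" for i
    using support_nth_Suc_mod[OF perm px] that by (simp add: L_def m_def)
  have m3: "m \<ge> 3"
  proof -
    have "(p ^^ 2) x = p (p x)" by (simp add: numeral_2_eq_2)
    then have "m \<noteq> 2"
      using least_power_of_permutation(1)[OF perm, of x] x by (auto simp: m_def)
    then show ?thesis using least_power_gt_one[OF perm px] m_def by simp
  qed
  have inW: "(p ^^ i) x \<in> W" for i
  proof -
    have "x \<in> W" using px pW by (meson permutes_not_in)
    then show ?thesis by (induction i) (simp_all add: permutes_in_image[OF pW])
  qed
  show "set L \<subseteq> W" using inW by (auto simp: L_def)
  show "is_cycle A L"
    unfolding is_cycle_def
    using m3 len cycle_of_permutation[OF perm] step nth inW padj by (auto simp: L_def)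
  show "x \<in> set L"
    using nth[of 0] m3 len by (metis gr_zeroI nth_mem funpow_0 not_numeral_le_zero)
  show "\<forall>y\<in>set L. {y, p y} \<in> cycle_edges L \<and> p (p y) \<noteq> y"
  proof
    fix y assume "y \<in> set L"
    then obtain i where i: "i < m" "y = L ! i" using len by (auto simp: in_set_conv_nth)
    then have "{y, p y} \<in> cycle_edges L"
      using step[OF i(1)] len by (auto simp: cycle_edges_def)
    moreover have "p (p y) \<noteq> y"
      using funpow_not_involutive[OF permutes_inj[OF pW] x, of i] i nth by simp
    ultimately show "{y, p y} \<in> cycle_edges L \<and> p (p y) \<noteq> y" ..
  qed
qed

section \<open>Unicyclic oriented graphs\<close>

locale oriented_unicyclic =
  fixes A :: "('v::finite \<times> 'v) set" and cs :: "'v list"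
  assumes oriented: "oriented_graph A" and unicyclic: "unicyclic A" and cycle: "is_cycle A cs"
begin

abbreviation "k \<equiv> length cs"
abbreviation "C \<equiv> set cs"
abbreviation "fwd \<equiv> cycle_of_list cs"
abbreviation "bwd \<equiv> cycle_of_list (rev cs)"
abbreviation "\<beta> \<equiv> matching_number A UNIV"
abbreviation "minor W \<equiv> det (principal_submatrix (skew_adj A) W)"

definition cycle_sign :: real where
  "cycle_sign = (\<Prod>i<k. skew_entry A (cs ! i) (cs ! ((i + 1) mod k)))"

lemma length_ge_3: "k \<ge> 3" and distinct_cs: "distinct cs"
  using cycle by (auto simp: is_cycle_def)

lemma length_pos: "0 < k"
  using length_ge_3 by linarith

lemma card_C: "card C = k"
  by (rule distinct_card[OF distinct_cs])

lemma nth_eq_iff: "i < k \<Longrightarrow> j < k \<Longrightarrow> cs ! i = cs ! j \<longleftrightarrow> i = j"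
  using nth_eq_iff_index_eq[OF distinct_cs] by blast

lemma adj_nth: "i < k \<Longrightarrow> adj A (cs ! i) (cs ! ((i + 1) mod k))"
  using cycle by (simp add: is_cycle_def)

lemma fwd_permutes: "fwd permutes C" and bwd_permutes: "bwd permutes C"
  using cycle_permutes[of cs] cycle_permutes[of "rev cs"] by auto

lemma fwd_in: "y \<in> C \<Longrightarrow> fwd y \<in> C" and bwd_in: "y \<in> C \<Longrightarrow> bwd y \<in> C"
  using fwd_permutes bwd_permutes by (auto simp: permutes_in_image)

lemma funpow_fwd_nth: "i < k \<Longrightarrow> (fwd ^^ n) (cs ! i) = cs ! ((n + i) mod k)"
  using cyclic_rotation[OF distinct_cs, of n] by (metis length_map nth_map nth_rotate)

lemma fwd_nth: "i < k \<Longrightarrow> fwd (cs ! i) = cs ! ((i + 1) mod k)"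
  using funpow_fwd_nth[of i 1] by simp

lemma bwd_nth:
  assumes j: "j < k"
  shows "bwd (cs ! ((j + 1) mod k)) = cs ! j"
proof -
  have rot: "bwd (rev cs ! i) = rev cs ! ((i + 1) mod k)" if "i < k" for i
  proof -
    have "map (bwd ^^ 1) (rev cs) = rotate 1 (rev cs)"
      by (rule cyclic_rotation) (simp add: distinct_cs)
    then have "bwd (rev cs ! i) = rotate1 (rev cs) ! i"
      using that by (metis One_nat_def funpow.simps length_rev nth_map o_id rotate_Suc rotate0 id_apply)
    then show ?thesis using that by (simp add: nth_rotate1)
  qed
  show ?thesis
  proof (cases "j + 1 < k")
    case True
    have "rev cs ! (k - 2 - j) = cs ! (j + 1)" "rev cs ! (k - 1 - j) = cs ! j"
      using True j by (simp_all add: rev_nth)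
    moreover have "(k - 2 - j + 1) mod k = k - 1 - j" using True by simp
    ultimately show ?thesis using rot[of "k - 2 - j"] True by simp
  next
    case False
    then have "j = k - 1" using j by simp
    moreover have "rev cs ! (k - 1) = cs ! 0"
      using length_ge_3 by (simp add: rev_nth)
    moreover have "rev cs ! 0 = cs ! (k - 1)"
      using length_ge_3 rev_nth[OF length_pos] by simp
    moreover have "(k - 1 + 1) mod k = 0"
      using length_pos by simp
    ultimately show ?thesis using rot[of "k - 1"] length_ge_3 by simp
  qed
qed

lemma bwd_fwd: "y \<in> C \<Longrightarrow> bwd (fwd y) = y"
  using fwd_nth bwd_nth by (auto simp: in_set_conv_nth)

lemma fwd_bwd: "y \<in> C \<Longrightarrow> fwd (bwd y) = y"
  using bwd_fwd cycle_is_surj[OF distinct_cs] by force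

lemma fwd_fwd_neq: "y \<in> C \<Longrightarrow> fwd (fwd y) \<noteq> y"
proof -
  assume "y \<in> C"
  then obtain i where i: "i < k" "y = cs ! i" by (auto simp: in_set_conv_nth)
  have "fwd (fwd y) = cs ! ((2 + i) mod k)"
    using funpow_fwd_nth[OF i(1), of 2] i(2) by (simp add: numeral_2_eq_2)
  moreover have "(2 + i) mod k \<noteq> i"
    using i(1) length_ge_3 by (cases "2 + i < k") (auto simp: le_mod_geq)
  ultimately show ?thesis
    using i nth_eq_iff[of "(2 + i) mod k" i] length_pos by simp
qed

lemma fwd_neq_bwd: "y \<in> C \<Longrightarrow> fwd y \<noteq> bwd y"
  using fwd_fwd_neq fwd_bwd by metis

lemma bwd_bwd_neq: "y \<in> C \<Longrightarrow> bwd (bwd y) \<noteq> y"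
  by (metis fwd_bwd bwd_in fwd_neq_bwd)

lemma adj_fwd: "y \<in> C \<Longrightarrow> adj A y (fwd y)"
  using adj_nth fwd_nth by (auto simp: in_set_conv_nth)

lemma adj_bwd: "y \<in> C \<Longrightarrow> adj A y (bwd y)"
  using adj_fwd[of "bwd y"] fwd_bwd bwd_in adj_sym by metis

lemma cycle_edge_neighbour:
  assumes "y \<in> C" and "{y, z} \<in> cycle_edges cs"
  shows "z = fwd y \<or> z = bwd y"
proof -
  obtain i where i: "i < k" "{y, z} = {cs ! i, cs ! ((i + 1) mod k)}"
    using assms(2) by (auto simp: cycle_edges_def)
  then show ?thesis using fwd_nth bwd_nth by (auto simp: doubleton_eq_iff)
qed

lemma sign_fwd: "sign fwd = (-1) ^ (k - 1)" and sign_bwd: "sign bwd = (-1) ^ (k - 1)"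
  using sign_cycle_of_list[of cs] sign_cycle_of_list[of "rev cs"] distinct_cs length_pos by auto

lemma prod_fwd: "(\<Prod>y\<in>C. skew_entry A y (fwd y)) = cycle_sign"
proof -
  have C: "C = (\<lambda>i. cs ! i) ` {..<k}"
    by (auto simp: in_set_conv_nth)
  have "(\<Prod>y\<in>C. skew_entry A y (fwd y)) = (\<Prod>i<k. skew_entry A (cs ! i) (fwd (cs ! i)))"
    by (subst C, subst prod.reindex) (use inj_on_nth[OF distinct_cs] in auto)
  also have "\<dots> = cycle_sign"
    unfolding cycle_sign_def by (rule prod.cong) (auto simp: fwd_nth)
  finally show ?thesis .
qed

lemma prod_bwd: "(\<Prod>y\<in>C. skew_entry A y (bwd y)) = (-1) ^ k * cycle_sign"
proof -
  have "(\<Prod>y\<in>C. skew_entry A y (bwd y)) = (\<Prod>y\<in>C. skew_entry A (fwd y) (bwd (fwd y)))"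
    using prod.reindex_bij_betw[OF permutes_imp_bij[OF fwd_permutes], of "\<lambda>y. skew_entry A y (bwd y)"]
    by simp
  also have "\<dots> = (\<Prod>y\<in>C. - skew_entry A y (fwd y))"
  proof (rule prod.cong[OF refl])
    fix y assume "y \<in> C"
    then show "skew_entry A (fwd y) (bwd (fwd y)) = - skew_entry A y (fwd y)"
      using bwd_fwd skew_entry_antisym[OF oriented, of "fwd y" y] by simp
  qed
  also have "\<dots> = (-1) ^ k * cycle_sign"
    by (simp add: prod_uminus prod_fwd card_C)
  finally show ?thesis .
qed

lemma cycle_sign_cases: "cycle_sign = 1 \<or> cycle_sign = -1"
proof -
  have "\<bar>cycle_sign\<bar> = (\<Prod>i<k. \<bar>skew_entry A (cs ! i) (cs ! ((i + 1) mod k))\<bar>)"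
    unfolding cycle_sign_def by (rule abs_prod)
  also have "\<dots> = (\<Prod>i<k. 1)"
    by (rule prod.cong[OF refl]) (metis abs_skew_entry adj_nth lessThan_iff)
  finally show ?thesis by auto
qed

lemma evenly_oriented_iff: "evenly_oriented A cs \<longleftrightarrow> cycle_sign > 0"
  by (simp add: evenly_oriented_def cycle_sign_def)

lemma non_involutive_point_on_cycle:
  assumes p: "p \<in> neighbour_permutations A W" and x: "p (p x) \<noteq> x"
  shows "x \<in> C" "C \<subseteq> W" "\<forall>y\<in>C. (p y = fwd y \<or> p y = bwd y) \<and> p (p y) \<noteq> y"
proof -
  obtain L where L: "is_cycle A L" "x \<in> set L" "set L \<subseteq> W"
    "\<forall>y\<in>set L. {y, p y} \<in> cycle_edges L \<and> p (p y) \<noteq> y"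
    using neighbour_permutation_orbit_cycle[OF p finite x] by blast
  have edges_L: "cycle_edges L = cycle_edges cs"
    using unicyclic L(1) cycle unfolding unicyclic_def by blast
  have "set L = C"
    using Union_cycle_edges[of L] Union_cycle_edges[of cs] L(1) length_ge_3 edges_L
    by (simp add: is_cycle_def)
  then show "x \<in> C" "C \<subseteq> W" "\<forall>y\<in>C. (p y = fwd y \<or> p y = bwd y) \<and> p (p y) \<noteq> y"
    using L edges_L cycle_edge_neighbour by auto
qed

(* Once p follows the cycle forwards at one vertex, p (p y) \<noteq> y forces it to do so at the next. *)
lemma follows_fwd_or_bwd:
  assumes H: "\<forall>y\<in>C. (p y = fwd y \<or> p y = bwd y) \<and> p (p y) \<noteq> y"
  shows "(\<forall>y\<in>C. p y = fwd y) \<or> (\<forall>y\<in>C. p y = bwd y)"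
proof (cases "\<exists>y0\<in>C. p y0 = fwd y0")
  case True
  then obtain y0 where y0: "y0 \<in> C" "p y0 = fwd y0" by blast
  have iter: "(fwd ^^ n) y0 \<in> C \<and> p ((fwd ^^ n) y0) = fwd ((fwd ^^ n) y0)" for n
  proof (induction n)
    case (Suc n)
    define z where "z = (fwd ^^ n) y0"
    have "z \<in> C" "p z = fwd z" using Suc z_def by simp_all
    moreover have "p (fwd z) = fwd (fwd z) \<or> p (fwd z) = z"
      using H fwd_in[OF \<open>z \<in> C\<close>] bwd_fwd[OF \<open>z \<in> C\<close>] by metis
    ultimately show ?case
      using H fwd_in z_def by auto
  qed (use y0 in simp)
  have "p y = fwd y" if yC: "y \<in> C" for y
  proof -
    obtain j where j: "j < k" "y = cs ! j" using yC by (auto simp: in_set_conv_nth)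
    obtain i where i: "i < k" "y0 = cs ! i" using y0(1) by (auto simp: in_set_conv_nth)
    have "(fwd ^^ (j + k - i)) y0 = y"
      using funpow_fwd_nth[OF i(1), of "j + k - i"] i j by simp
    then show ?thesis using iter[of "j + k - i"] by simp
  qed
  then show ?thesis by blast
qed (use H in blast)

lemma non_involution_decomposition:
  assumes p: "p \<in> neighbour_permutations A W" and "\<not> (\<forall>i. p (p i) = i)"
  shows "C \<subseteq> W \<and> (\<exists>q\<in>neighbour_involutions A (W - C). p = fwd \<circ> q \<or> p = bwd \<circ> q)"
proof -
  have pW: "p permutes W" and padj: "\<forall>i\<in>W. adj A i (p i)"
    using p by (auto simp: neighbour_permutations_def)
  obtain x where x: "p (p x) \<noteq> x" using assms(2) by blast
  have CW: "C \<subseteq> W" and H: "\<forall>y\<in>C. (p y = fwd y \<or> p y = bwd y) \<and> p (p y) \<noteq> y"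
    using non_involutive_point_on_cycle[OF p x] by auto
  obtain c where c: "c \<in> {fwd, bwd}" and pc: "\<forall>y\<in>C. p y = c y"
    using follows_fwd_or_bwd[OF H] by blast
  have inv_out: "p (p y) = y" if "y \<notin> C" for y
    using non_involutive_point_on_cycle(1)[OF p] that by blast
  have out: "p y \<notin> C" if "y \<notin> C" for y
    using inv_out[OF that] that pc c fwd_in bwd_in by (metis insertE singletonD)
  define q where "q y = (if y \<in> C then y else p y)" for y
  have q_inv: "q (q y) = y" for y
    using inv_out out by (auto simp: q_def)
  have "q permutes (W - C)"
    unfolding permutes_def using q_inv pW by (metis DiffI permutes_not_in q_def)
  then have "q \<in> neighbour_involutions A (W - C)"
    using q_inv padj by (auto simp: neighbour_involutions_def neighbour_permutations_def q_def)
  moreover have "p = c \<circ> q"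
  proof
    fix y
    show "p y = (c \<circ> q) y"
      using pc out[of y] c fwd_permutes bwd_permutes by (auto simp: q_def permutes_not_in)
  qed
  ultimately show ?thesis using CW c by blast
qed

lemma cycle_comp_neighbour_involution:
  assumes CW: "C \<subseteq> W" and q: "q \<in> neighbour_involutions A (W - C)" and c: "c \<in> {fwd, bwd}"
  shows "c \<circ> q \<in> neighbour_permutations A W - neighbour_involutions A W"
    and "permutation_term A W (c \<circ> q) = of_int (sign c) * (\<Prod>y\<in>C. skew_entry A y (c y))"
proof -
  have c_perm: "c permutes C" using c fwd_permutes bwd_permutes by auto
  have q_perm: "q permutes (W - C)" and q_adj: "\<forall>i\<in>W - C. adj A i (q i)"
    using q by (auto simp: neighbour_involutions_def neighbour_permutations_def)
  have qC: "q y = y" if "y \<in> C" for y using q_perm that by (simp add: permutes_not_in)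
  have c_out: "c y = y" if "y \<notin> C" for y using c_perm that by (simp add: permutes_not_in)
  have q_in: "q i \<in> W - C" if "i \<in> W - C" for i
    using permutes_in_image[OF q_perm] that by blast
  have "c \<circ> q permutes W"
    by (rule permutes_compose[OF permutes_subset[OF q_perm] permutes_subset[OF c_perm CW]]) auto
  moreover have "adj A i ((c \<circ> q) i)" if "i \<in> W" for i
    using that c qC adj_fwd adj_bwd q_adj q_in c_out by (cases "i \<in> C") auto
  moreover have "(c \<circ> q) ((c \<circ> q) (cs ! 0)) \<noteq> cs ! 0"
    using length_pos c fwd_in bwd_in qC fwd_fwd_neq bwd_bwd_neq by auto
  ultimately show "c \<circ> q \<in> neighbour_permutations A W - neighbour_involutions A W"
    by (auto simp: neighbour_permutations_def neighbour_involutions_def)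
  have "sign (c \<circ> q) = sign c * sign q"
    using c_perm q_perm by (meson finite sign_compose permutation_permutes)
  moreover have "(\<Prod>i\<in>W. skew_entry A i ((c \<circ> q) i)) =
     (\<Prod>i\<in>W - C. skew_entry A i (q i)) * (\<Prod>i\<in>C. skew_entry A i (c i))"
  proof -
    have "(\<Prod>i\<in>W - C. skew_entry A i ((c \<circ> q) i)) = (\<Prod>i\<in>W - C. skew_entry A i (q i))"
      using q_in c_out by (intro prod.cong) auto
    moreover have "(\<Prod>i\<in>C. skew_entry A i ((c \<circ> q) i)) = (\<Prod>i\<in>C. skew_entry A i (c i))"
      using qC by (intro prod.cong) auto
    ultimately show ?thesis
      using prod.subset_diff[OF CW finite] by metis
  qed
  moreover have "permutation_term A (W - C) q = 1"
    by (rule permutation_term_neighbour_involution[OF oriented _ q]) simp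
  ultimately show "permutation_term A W (c \<circ> q) = of_int (sign c) * (\<Prod>y\<in>C. skew_entry A y (c y))"
    by (simp add: permutation_term_def algebra_simps)
qed

lemma non_involutions_eq:
  "neighbour_permutations A W - neighbour_involutions A W =
    (if C \<subseteq> W then (\<lambda>q. fwd \<circ> q) ` neighbour_involutions A (W - C) \<union>
                   (\<lambda>q. bwd \<circ> q) ` neighbour_involutions A (W - C)
     else {})"
proof -
  have "p \<in> neighbour_permutations A W - neighbour_involutions A W \<longleftrightarrow>
      C \<subseteq> W \<and> (\<exists>q\<in>neighbour_involutions A (W - C). p = fwd \<circ> q \<or> p = bwd \<circ> q)" for p
  proof
    assume "p \<in> neighbour_permutations A W - neighbour_involutions A W"
    then show "C \<subseteq> W \<and> (\<exists>q\<in>neighbour_involutions A (W - C). p = fwd \<circ> q \<or> p = bwd \<circ> q)"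
      using non_involution_decomposition[of p W] by (simp add: neighbour_involutions_def)
  next
    assume "C \<subseteq> W \<and> (\<exists>q\<in>neighbour_involutions A (W - C). p = fwd \<circ> q \<or> p = bwd \<circ> q)"
    then show "p \<in> neighbour_permutations A W - neighbour_involutions A W"
      using cycle_comp_neighbour_involution(1)[of W _ fwd] cycle_comp_neighbour_involution(1)[of W _ bwd]
      by blast
  qed
  then show ?thesis
    by (auto simp: image_iff) blast
qed

lemma sum_permutation_term_cycle_comp:
  assumes CW: "C \<subseteq> W" and c: "c \<in> {fwd, bwd}"
  shows "(\<Sum>p\<in>(\<lambda>q. c \<circ> q) ` neighbour_involutions A (W - C). permutation_term A W p) =
    real (card (neighbour_involutions A (W - C))) * (of_int (sign c) * (\<Prod>y\<in>C. skew_entry A y (c y)))"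
proof -
  have "inj c" using c permutes_inj[OF fwd_permutes] permutes_inj[OF bwd_permutes] by auto
  then have "inj_on (\<lambda>q. c \<circ> q) (neighbour_involutions A (W - C))"
    by (auto simp: inj_on_def fun_eq_iff dest: injD)
  then show ?thesis
    by (simp add: sum.reindex cycle_comp_neighbour_involution(2)[OF CW _ c])
qed

lemma fwd_comp_image_disjoint_bwd_comp_image:
  "(\<lambda>q. fwd \<circ> q) ` neighbour_involutions A (W - C) \<inter>
   (\<lambda>q. bwd \<circ> q) ` neighbour_involutions A (W - C) = {}"
proof -
  have "(fwd \<circ> q) (cs ! 0) \<noteq> (bwd \<circ> q') (cs ! 0)"
    if "q \<in> neighbour_involutions A (W - C)" "q' \<in> neighbour_involutions A (W - C)" for q q'
  proof -
    have "q (cs ! 0) = cs ! 0" "q' (cs ! 0) = cs ! 0"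
      using that nth_mem[OF length_pos]
      by (auto simp: neighbour_involutions_def neighbour_permutations_def permutes_not_in)
    then show ?thesis
      using fwd_neq_bwd[OF nth_mem[OF length_pos]] by simp
  qed
  then show ?thesis by fastforce
qed

lemma sum_non_involution_terms:
  "(\<Sum>p\<in>neighbour_permutations A W - neighbour_involutions A W. permutation_term A W p) =
    (if C \<subseteq> W then real (card (perfect_matchings A (W - C))) *
       (if even k then - 2 * cycle_sign else 0) else 0)"
proof (cases "C \<subseteq> W")
  case CW: True
  let ?Q = "neighbour_involutions A (W - C)"
  have "(\<Sum>p\<in>neighbour_permutations A W - neighbour_involutions A W. permutation_term A W p) =
      real (card ?Q) * ((-1) ^ (k - 1) * cycle_sign) +
      real (card ?Q) * ((-1) ^ (k - 1) * ((-1) ^ k * cycle_sign))"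
    using CW sum_permutation_term_cycle_comp[OF CW] fwd_comp_image_disjoint_bwd_comp_image
    by (simp add: non_involutions_eq sum.union_disjoint finite_neighbour_permutations
        sign_fwd sign_bwd prod_fwd prod_bwd)
  also have "\<dots> = real (card ?Q) * (if even k then - 2 * cycle_sign else 0)"
    using length_pos by (cases "even k") (simp_all add: algebra_simps)
  finally show ?thesis
    using CW card_neighbour_involutions[OF oriented] by simp
qed (simp add: non_involutions_eq)

lemma minor_eq_perfect_matchings:
  "minor W = real (card (perfect_matchings A W)) +
    (if C \<subseteq> W then real (card (perfect_matchings A (W - C))) *
       (if even k then - 2 * cycle_sign else 0) else 0)"
proof -
  let ?NP = "neighbour_permutations A W" and ?NI = "neighbour_involutions A W"
  have "minor W = (\<Sum>p\<in>?NI. permutation_term A W p) + (\<Sum>p\<in>?NP - ?NI. permutation_term A W p)"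
    unfolding det_principal_submatrix_skew_adj
    by (subst add.commute, rule sum.subset_diff)
      (auto simp: neighbour_involutions_def finite_neighbour_permutations)
  also have "(\<Sum>p\<in>?NI. permutation_term A W p) = (\<Sum>p\<in>?NI. 1)"
    by (rule sum.cong[OF refl]) (rule permutation_term_neighbour_involution[OF oriented finite])
  also have "\<dots> = real (card (perfect_matchings A W))"
    using card_neighbour_involutions[OF oriented] by simp
  finally show ?thesis
    by (simp only: sum_non_involution_terms)
qed

definition cycle_matching :: "'v set set" where
  "cycle_matching = {{cs ! (2 * i), cs ! (2 * i + 1)} | i. i < k div 2}"

definition rotated_cycle_matching :: "'v set set" where
  "rotated_cycle_matching = (\<lambda>e. fwd ` e) ` cycle_matching"

lemma cycle_matching_perfect:
  assumes ev: "even k"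
  shows "cycle_matching \<in> perfect_matchings A C"
proof -
  have idx: "2 * i + 1 < k" if "i < k div 2" for i using that ev by (auto elim!: evenE)
  have "{cs ! (2 * i), cs ! (2 * i + 1)} \<in> edges A" if "i < k div 2" for i
    using adj_nth[of "2 * i"] idx[OF that] by (simp add: edgesI)
  then have "cycle_matching \<subseteq> {e \<in> edges A. e \<subseteq> C}"
    using idx by (auto simp: cycle_matching_def)
  moreover have "e \<inter> f = {}" if ef: "e \<in> cycle_matching" "f \<in> cycle_matching" "e \<noteq> f" for e f
  proof -
    obtain i j where "i < k div 2" "j < k div 2" "i \<noteq> j"
      "e = {cs ! (2 * i), cs ! (2 * i + 1)}" "f = {cs ! (2 * j), cs ! (2 * j + 1)}"
      using ef by (auto simp: cycle_matching_def)
    then show ?thesis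
      using idx nth_eq_iff by auto
  qed
  ultimately have m: "matching_in A C cycle_matching"
    unfolding matching_in_def by blast
  have "C \<subseteq> \<Union>cycle_matching"
  proof
    fix y assume "y \<in> C"
    then obtain a where a: "a < k" "y = cs ! a" by (auto simp: in_set_conv_nth)
    then have "a div 2 < k div 2"
      using ev by (auto elim!: evenE)
    moreover have "y \<in> {cs ! (2 * (a div 2)), cs ! (2 * (a div 2) + 1)}"
      using a by (cases "even a") (auto elim!: evenE oddE)
    ultimately show "y \<in> \<Union>cycle_matching"
      by (auto simp: cycle_matching_def)
  qed
  then show ?thesis
    using m by (auto simp: perfect_matchings_def matching_in_def)
qed

lemma rotated_cycle_matching_perfect:
  assumes ev: "even k"
  shows "rotated_cycle_matching \<in> perfect_matchings A C"
proof -
  have m: "matching_in A C cycle_matching" and U: "\<Union>cycle_matching = C"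
    using cycle_matching_perfect[OF ev] by (auto simp: perfect_matchings_def)
  have inj: "inj fwd" using permutes_inj[OF fwd_permutes] .
  have "fwd ` e \<in> edges A" if e: "e \<in> cycle_matching" for e
  proof -
    obtain i where i: "i < k div 2" "e = {cs ! (2 * i), cs ! (2 * i + 1)}"
      using e by (auto simp: cycle_matching_def)
    then have "2 * i + 1 < k"
      using ev by (auto elim!: evenE)
    then show ?thesis
      using i adj_fwd[of "cs ! (2 * i + 1)"] fwd_nth[of "2 * i"] by (auto intro!: edgesI)
  qed
  moreover have "fwd ` e \<subseteq> C" if "e \<in> cycle_matching" for e
    using matching_inD(1)[OF m that] fwd_in by blast
  moreover have "fwd ` e \<inter> fwd ` f = {}"
    if "e \<in> cycle_matching" "f \<in> cycle_matching" "fwd ` e \<noteq> fwd ` f" for e f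
  proof -
    have "e \<inter> f = {}" using matching_inD(2)[OF m that(1,2)] that(3) by auto
    then show ?thesis using image_Int[OF inj, of e f] by simp
  qed
  ultimately have "matching_in A C rotated_cycle_matching"
    unfolding matching_in_def rotated_cycle_matching_def by blast
  moreover have "\<Union>rotated_cycle_matching = C"
  proof -
    have "\<Union>rotated_cycle_matching = fwd ` \<Union>cycle_matching"
      by (auto simp: rotated_cycle_matching_def)
    then show ?thesis
      using U cycle_is_surj[OF distinct_cs] by simp
  qed
  ultimately show ?thesis by (simp add: perfect_matchings_def)
qed

lemma cycle_matching_neq_rotated:
  assumes ev: "even k"
  shows "cycle_matching \<noteq> rotated_cycle_matching"
proof
  assume eq: "cycle_matching = rotated_cycle_matching"
  have k4: "k \<ge> 4" using length_ge_3 ev by (auto elim!: evenE)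
  have "{cs ! 0, cs ! 1} \<in> rotated_cycle_matching"
    using eq k4 by (auto simp: cycle_matching_def intro!: exI[of _ 0])
  then obtain i where i: "i < k div 2" "{cs ! 0, cs ! 1} = fwd ` {cs ! (2 * i), cs ! (2 * i + 1)}"
    by (auto simp: rotated_cycle_matching_def cycle_matching_def)
  have a: "2 * i + 1 < k" using i ev by (auto elim!: evenE)
  then have e: "{cs ! 0, cs ! 1} = {cs ! (2 * i + 1), cs ! ((2 * i + 2) mod k)}"
    using i(2) fwd_nth[of "2 * i"] fwd_nth[of "2 * i + 1"] by simp
  then have "cs ! (2 * i + 1) \<in> {cs ! 0, cs ! 1}" by simp
  then have "2 * i + 1 = 1"
    using a k4 length_pos nth_eq_iff[of "2 * i + 1" 0] nth_eq_iff[of "2 * i + 1" 1] by auto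
  then have "cs ! 2 \<in> {cs ! 0, cs ! 1}"
    using e k4 by (simp add: numeral_2_eq_2)
  then show False using k4 length_pos nth_eq_iff[of 2 0] nth_eq_iff[of 2 1] by auto
qed

(* The two perfect matchings of the even cycle extend every perfect matching of W - C. *)
lemma card_perfect_matchings_ge:
  assumes ev: "even k" and CW: "C \<subseteq> W"
  shows "2 * card (perfect_matchings A (W - C)) \<le> card (perfect_matchings A W)"
proof -
  define X where "X b = (if b then cycle_matching else rotated_cycle_matching)" for b
  define g where "g = (\<lambda>(M, b). M \<union> X b)"
  have X: "X b \<in> perfect_matchings A C" for b
    using cycle_matching_perfect[OF ev] rotated_cycle_matching_perfect[OF ev] by (simp add: X_def)
  have split: "{e \<in> g (M, b). e \<inter> C = {}} = M \<and> {e \<in> g (M, b). e \<inter> C \<noteq> {}} = X b"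
    if "M \<in> perfect_matchings A (W - C)" for M b
  proof -
    have "e \<inter> C = {}" if "e \<in> M" for e
      using \<open>M \<in> _\<close> that by (auto simp: perfect_matchings_def)
    moreover have "e \<inter> C \<noteq> {}" if "e \<in> X b" for e
      using X[of b] that by (auto simp: perfect_matchings_def matching_in_def edges_def)
    ultimately show ?thesis by (auto simp: g_def)
  qed
  have "inj_on g (perfect_matchings A (W - C) \<times> UNIV)"
  proof (rule inj_onI, clarify)
    fix M b N c
    assume "M \<in> perfect_matchings A (W - C)" "N \<in> perfect_matchings A (W - C)" "g (M, b) = g (N, c)"
    then have "M = N" "X b = X c" using split by metis+
    then show "M = N \<and> b = c"
      using cycle_matching_neq_rotated[OF ev] by (auto simp: X_def split: if_splits)
  qed
  moreover have "g ` (perfect_matchings A (W - C) \<times> UNIV) \<subseteq> perfect_matchings A W"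
    using perfect_matching_Un[OF CW _ X] by (auto simp: g_def)
  ultimately have "card (perfect_matchings A (W - C) \<times> (UNIV :: bool set)) \<le> card (perfect_matchings A W)"
    by (intro card_inj_on_le) simp_all
  then show ?thesis by (simp add: card_cartesian_product mult.commute)
qed

lemma minor_eq_0_if_no_perfect_matching:
  assumes "perfect_matchings A W = {}"
  shows "minor W = 0"
proof -
  have "perfect_matchings A (W - C) = {}" if "even k" "C \<subseteq> W"
    using card_perfect_matchings_ge[OF that] assms by (simp add: card_eq_0_iff)
  then show ?thesis
    using assms minor_eq_perfect_matchings[of W] by auto
qed

lemma minor_eq_0_if_card:
  assumes "odd (card W) \<or> 2 * \<beta> < card W"
  shows "minor W = 0"
proof (rule minor_eq_0_if_no_perfect_matching)
  show "perfect_matchings A W = {}"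
  proof (rule ccontr)
    assume "perfect_matchings A W \<noteq> {}"
    then obtain M where M: "M \<in> perfect_matchings A W" by blast
    then have "card M \<le> \<beta>"
      using card_matching_le_matching_number[of A W M] by (simp add: perfect_matchings_def)
    then show False
      using assms card_perfect_matching[OF oriented M] by auto
  qed
qed

lemma skew_rank_principal_minor:
  obtains W where "card W = skew_rank A" "minor W \<noteq> 0"
  using skew_symmetric_rank_principal_minor[OF skew_adj_skew_symmetric[OF oriented]]
  unfolding skew_rank_def by blast

lemma card_le_skew_rank: "minor W \<noteq> 0 \<Longrightarrow> card W \<le> skew_rank A"
  unfolding skew_rank_def by (rule card_le_rank_if_det_principal_submatrix_nonzero)

lemma skew_rank_le: "skew_rank A \<le> 2 * \<beta>"
  by (metis skew_rank_principal_minor minor_eq_0_if_card not_le)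

lemma even_skew_rank: "even (skew_rank A)"
  by (metis skew_rank_principal_minor minor_eq_0_if_card)

lemma maximum_matching_meets_cycle:
  assumes m: "matching_in A UNIV M" and c: "card M = \<beta>"
  obtains e where "e \<in> M" "e \<inter> C \<noteq> {}"
proof (rule ccontr)
  assume "\<not> thesis"
  with that have disj: "\<forall>e\<in>M. e \<inter> C = {}" by blast
  define e0 where "e0 = {cs ! 0, cs ! 1}"
  have "adj A (cs ! 0) (cs ! 1)"
    using adj_nth[OF length_pos] length_ge_3 by simp
  moreover have "cs ! 0 \<in> C" "cs ! 1 \<in> C"
    using length_ge_3 by (simp_all add: nth_mem[OF length_pos])
  ultimately have e0: "e0 \<in> edges A" "e0 \<subseteq> C"
    by (auto simp: e0_def intro: edgesI)
  have "e0 \<notin> M"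
    using disj e0(2) by (auto simp: e0_def)
  moreover have "matching_in A UNIV (insert e0 M)"
    using disj e0 by (intro matching_in_insert[OF m]) auto
  ultimately show False
    using card_matching_le_matching_number[of A UNIV "insert e0 M"] c by simp
qed

lemma skew_rank_ge: "2 * \<beta> - 2 \<le> skew_rank A"
proof -
  obtain M where M: "matching_in A UNIV M" "card M = \<beta>"
    by (rule maximum_matching_exists)
  obtain e where e: "e \<in> M" "e \<inter> C \<noteq> {}"
    by (rule maximum_matching_meets_cycle[OF M])
  define W where "W = \<Union>(M - {e})"
  have "matching_in A UNIV (M - {e})"
    using M(1) by (auto simp: matching_in_def)
  then have PM: "M - {e} \<in> perfect_matchings A W"
    unfolding W_def by (rule matching_in_Union)
  have "\<not> C \<subseteq> W"
    using e matching_inD(2)[OF M(1) e(1)] unfolding W_def by blast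
  then have "minor W = real (card (perfect_matchings A W))"
    using minor_eq_perfect_matchings[of W] by simp
  moreover have "card (perfect_matchings A W) > 0"
    using PM by (auto simp: card_gt_0_iff)
  ultimately have "card W \<le> skew_rank A"
    by (intro card_le_skew_rank) linarith
  then show ?thesis
    using card_perfect_matching[OF oriented PM] M(2) e(1) by simp
qed

lemma skew_rank_if_not_evenly:
  assumes "\<not> (even k \<and> cycle_sign > 0)"
  shows "skew_rank A = 2 * \<beta>"
proof -
  obtain M where M: "matching_in A UNIV M" "card M = \<beta>"
    by (rule maximum_matching_exists)
  have PM: "M \<in> perfect_matchings A (\<Union>M)"
    by (rule matching_in_Union[OF M(1)])
  have "(if even k then - 2 * cycle_sign else 0) \<ge> 0"
    using assms by (simp add: not_less)
  then have "minor (\<Union>M) \<ge> real (card (perfect_matchings A (\<Union>M)))"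
    using minor_eq_perfect_matchings[of "\<Union>M"] by simp
  moreover have "card (perfect_matchings A (\<Union>M)) > 0"
    using PM by (auto simp: card_gt_0_iff)
  ultimately have "card (\<Union>M) \<le> skew_rank A"
    by (intro card_le_skew_rank) linarith
  then show ?thesis
    using skew_rank_le card_perfect_matching[OF oriented PM] M(2) by simp
qed

lemma half_length_le_matching_number:
  assumes "even k"
  shows "k div 2 \<le> \<beta>"
proof -
  have P: "cycle_matching \<in> perfect_matchings A C"
    by (rule cycle_matching_perfect[OF assms])
  then have "card cycle_matching \<le> \<beta>"
    by (intro card_matching_le_matching_number[of A C]) (simp add: perfect_matchings_def)
  then show ?thesis
    using card_perfect_matching[OF oriented P] card_C by simp
qed

context
  assumes even_length: "even k" and evenly: "cycle_sign > 0"
begin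

lemma minor_evenly_oriented:
  "minor W = real (card (perfect_matchings A W)) -
     (if C \<subseteq> W then 2 * real (card (perfect_matchings A (W - C))) else 0)"
  using minor_eq_perfect_matchings[of W] cycle_sign_cases evenly even_length
  by auto

lemma minor_evenly_oriented_nonneg: "minor W \<ge> 0"
  using minor_evenly_oriented[of W] card_perfect_matchings_ge[OF even_length, of W]
  by (auto simp del: of_nat_mult simp add: of_nat_mult[symmetric])

lemma sum_minors_evenly_oriented:
  "(\<Sum>W | card W = 2 * \<beta>. minor W) =
    real (num_matchings A UNIV \<beta>) - 2 * real (num_matchings A (UNIV - C) (\<beta> - k div 2))"
proof -
  have "card C = 2 * (k div 2)"
    using card_C even_length by simp
  then have "num_matchings A (UNIV - C) (\<beta> - k div 2) =
      (\<Sum>W | card W = 2 * \<beta>. if C \<subseteq> W then card (perfect_matchings A (W - C)) else 0)"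
    using num_matchings_compl_eq_sum_perfect_matchings[OF oriented]
      half_length_le_matching_number[OF even_length] by blast
  moreover have "(\<Sum>W | card W = 2 * \<beta>. minor W) =
      (\<Sum>W | card W = 2 * \<beta>. real (card (perfect_matchings A W))) -
      (\<Sum>W | card W = 2 * \<beta>. if C \<subseteq> W then 2 * real (card (perfect_matchings A (W - C))) else 0)"
    unfolding minor_evenly_oriented by (rule sum_subtractf)
  moreover have "(\<Sum>W | card W = 2 * \<beta>. if C \<subseteq> W then 2 * real (card (perfect_matchings A (W - C))) else 0) =
      2 * real (\<Sum>W | card W = 2 * \<beta>. if C \<subseteq> W then card (perfect_matchings A (W - C)) else 0)"
    by (auto simp: sum_distrib_left of_nat_sum intro!: sum.cong)
  ultimately show ?thesis
    by (simp add: num_matchings_eq_sum_perfect_matchings[OF oriented])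
qed

lemma skew_rank_if_evenly:
  "skew_rank A =
    (if num_matchings A UNIV \<beta> = 2 * num_matchings A (UNIV - C) (\<beta> - k div 2)
     then 2 * \<beta> - 2 else 2 * \<beta>)"
proof (cases "num_matchings A UNIV \<beta> = 2 * num_matchings A (UNIV - C) (\<beta> - k div 2)")
  case True
  then have "(\<Sum>W | card W = 2 * \<beta>. minor W) = 0"
    using sum_minors_evenly_oriented by simp
  then have "minor W = 0" if "card W = 2 * \<beta>" for W
    using sum_nonneg_eq_0_iff[of "{W. card W = 2 * \<beta>}" minor] minor_evenly_oriented_nonneg that
    by simp
  then have "skew_rank A \<noteq> 2 * \<beta>"
    by (metis skew_rank_principal_minor)
  then have "skew_rank A \<le> 2 * \<beta> - 2"
    using skew_rank_le even_skew_rank by (auto elim!: evenE)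
  then show ?thesis
    using True skew_rank_ge by simp
next
  case False
  then have "(\<Sum>W | card W = 2 * \<beta>. minor W) \<noteq> 0"
    using sum_minors_evenly_oriented by simp
  then obtain W where "card W = 2 * \<beta>" "minor W \<noteq> 0"
    by (metis (mono_tags, lifting) mem_Collect_eq sum.neutral)
  then show ?thesis
    using False skew_rank_le card_le_skew_rank by fastforce
qed

end

end

theorem theorem4p2:
  fixes A :: "('v::finite \<times> 'v) set" and cs :: "'v list"
  assumes "oriented_graph A"
    and "unicyclic A"
    and "is_cycle A cs"
  shows "skew_rank A =
    (if even (length cs) \<and> evenly_oriented A cs \<and>
        num_matchings A UNIV (matching_number A UNIV) =
          2 * num_matchings A (UNIV - set cs) (matching_number A UNIV - length cs div 2)
     then 2 * matching_number A UNIV - 2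
     else 2 * matching_number A UNIV)"
proof -
  interpret oriented_unicyclic A cs
    using assms by unfold_locales
  show ?thesis
  proof (cases "even (length cs) \<and> evenly_oriented A cs")
    case True
    then show ?thesis
      using skew_rank_if_evenly evenly_oriented_iff by simp
  next
    case False
    then show ?thesis
      using skew_rank_if_not_evenly evenly_oriented_iff by auto
  qed
qed

end
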